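(* Let $\Gamma$ be a locally-finite simple geodetic graph. If $\rho$ is an embedded circuit in $\Gamma$ of diameter exceeding two which has minimal length among all embedded circuits in $\Gamma$ of diameter exceeding two, then $\rho$ contains a subpath of length three (four consecutive vertices of $\rho$) that is a geodesic in $\Gamma$.
   Context: A graph is geodetic if between any two vertices there is a unique shortest path (geodesic); $d$ is the path metric. A path $u_0,\dots,u_n$ is an embedded circuit of length $n$ if $u_0,\dots,u_{n-1}$ are distinct and $u_0=u_n$. The diameter of an embedded circuit is the maximum distance in $\Gamma$ between two of its vertices. *)

theory Defs
  imports Main
begin

text \<open>Paths/walks are nonempty vertex lists with consecutive vertices adjacent;
the length of a walk xs is length xs - 1.\<close>

definition simple_graph :: "('a \<Rightarrow> 'a \<Rightarrow> bool) \<Rightarrow> bool" where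
  "simple_graph E \<longleftrightarrow> (\<forall>u v. E u v \<longrightarrow> E v u) \<and> (\<forall>u. \<not> E u u)"

definition locally_finite :: "('a \<Rightarrow> 'a \<Rightarrow> bool) \<Rightarrow> bool" where
  "locally_finite E \<longleftrightarrow> (\<forall>v. finite {w. E v w})"

definition walk :: "('a \<Rightarrow> 'a \<Rightarrow> bool) \<Rightarrow> 'a list \<Rightarrow> bool" where
  "walk E xs \<longleftrightarrow> xs \<noteq> [] \<and> (\<forall>i. Suc i < length xs \<longrightarrow> E (xs ! i) (xs ! Suc i))"

definition walk_from_to :: "('a \<Rightarrow> 'a \<Rightarrow> bool) \<Rightarrow> 'a \<Rightarrow> 'a \<Rightarrow> 'a list \<Rightarrow> bool" where
  "walk_from_to E u v xs \<longleftrightarrow> walk E xs \<and> hd xs = u \<and> last xs = v"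

text \<open>Path metric (only meaningful for connected graphs; geodetic graphs are connected).\<close>
definition gdist :: "('a \<Rightarrow> 'a \<Rightarrow> bool) \<Rightarrow> 'a \<Rightarrow> 'a \<Rightarrow> nat" where
  "gdist E u v = (LEAST n. \<exists>xs. walk_from_to E u v xs \<and> length xs = Suc n)"

definition geodesic :: "('a \<Rightarrow> 'a \<Rightarrow> bool) \<Rightarrow> 'a list \<Rightarrow> bool" where
  "geodesic E xs \<longleftrightarrow> walk E xs \<and> length xs = Suc (gdist E (hd xs) (last xs))"

definition geodetic :: "('a \<Rightarrow> 'a \<Rightarrow> bool) \<Rightarrow> bool" where
  "geodetic E \<longleftrightarrow> (\<forall>u v. \<exists>!xs. walk_from_to E u v xs \<and>
      (\<forall>ys. walk_from_to E u v ys \<longrightarrow> length xs \<le> length ys))"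

definition embedded_circuit :: "('a \<Rightarrow> 'a \<Rightarrow> bool) \<Rightarrow> 'a list \<Rightarrow> bool" where
  "embedded_circuit E xs \<longleftrightarrow> walk E xs \<and> distinct (butlast xs) \<and> hd xs = last xs"

definition circuit_length :: "'a list \<Rightarrow> nat" where
  "circuit_length xs = length xs - 1"

definition circuit_diameter :: "('a \<Rightarrow> 'a \<Rightarrow> bool) \<Rightarrow> 'a list \<Rightarrow> nat" where
  "circuit_diameter E xs = Max {gdist E u v | u v. u \<in> set xs \<and> v \<in> set xs}"

end

theory Submission
  imports Defs
begin

(* Suppose no four consecutive vertices of the minimal circuit form a geodesic, so that each
   vertex is within distance 2 of the vertex three steps further along, and let u and v be
   vertices of the circuit at distance at least 3. By minimality, no chord or two-edge detour may
   close off a shorter circuit still passing through u and v. Following a shortest path of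
   length at most 2 from u to the vertex three steps after u, this forces the predecessor of u
   to lie within distance 2 of v, and by symmetry so does its successor. Hence d(u, v) = 3 and
   there are two different geodesics from u to v, one through each neighbour, contradicting
   geodeticity. *)

lemma hd_upto [simp]: "i \<le> j \<Longrightarrow> hd [i..j] = i"
  by (simp add: upto_rec1)

lemma last_upto [simp]: "i \<le> j \<Longrightarrow> last [i..j] = j"
  by (simp add: upto_rec2)

lemma walk_Cons_Cons: "walk E (x # y # xs) \<longleftrightarrow> E x y \<and> walk E (y # xs)"
  unfolding walk_def by (auto simp: nth_Cons split: nat.splits)

lemma walk_singleton [simp]: "walk E [x]"
  by (simp add: walk_def)

lemma walk_Nil [simp]: "\<not> walk E []"
  by (simp add: walk_def)

lemma walk_snoc:
  assumes "walk E xs" "E (last xs) y"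
  shows "walk E (xs @ [y])"
  unfolding walk_def
proof (intro conjI allI impI)
  fix i assume i: "Suc i < length (xs @ [y])"
  show "E ((xs @ [y]) ! i) ((xs @ [y]) ! Suc i)"
  proof (cases "Suc i < length xs")
    case True
    then show ?thesis using assms(1) by (simp add: walk_def nth_append)
  next
    case False
    then have "i = length xs - 1" "xs \<noteq> []" using i assms(1) by auto
    then show ?thesis using assms(2) by (simp add: nth_append last_conv_nth)
  qed
qed simp

lemma walk_rev:
  assumes "simple_graph E" "walk E xs"
  shows "walk E (rev xs)"
  unfolding walk_def
proof (intro conjI allI impI)
  show "rev xs \<noteq> []" using assms(2) by (simp add: walk_def)
next
  fix i assume i: "Suc i < length (rev xs)"
  let ?j = "length xs - Suc (Suc i)"
  have "E (xs ! ?j) (xs ! Suc ?j)" using assms(2) i unfolding walk_def by simp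
  moreover have "rev xs ! i = xs ! Suc ?j" "rev xs ! Suc i = xs ! ?j"
    using i by (auto simp: rev_nth Suc_diff_Suc)
  ultimately show "E (rev xs ! i) (rev xs ! Suc i)"
    using assms(1) unfolding simple_graph_def by metis
qed

lemma gdist_le_length:
  assumes "walk_from_to E u v xs"
  shows "Suc (gdist E u v) \<le> length xs"
proof -
  have "length xs = Suc (length xs - 1)"
    using assms by (simp add: walk_from_to_def walk_def)
  then have "gdist E u v \<le> length xs - 1"
    unfolding gdist_def using assms by (metis (mono_tags, lifting) Least_le)
  with \<open>length xs = Suc (length xs - 1)\<close> show ?thesis by linarith
qed

lemma gdist_attained:
  assumes "walk_from_to E u v ys"
  shows "\<exists>xs. walk_from_to E u v xs \<and> length xs = Suc (gdist E u v)"
proof -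
  have "length ys = Suc (length ys - 1)"
    using assms by (simp add: walk_from_to_def walk_def)
  then have "\<exists>n xs. walk_from_to E u v xs \<and> length xs = Suc n"
    using assms by blast
  then show ?thesis unfolding gdist_def by (rule LeastI_ex)
qed

lemma geodetic_connected: "geodetic E \<Longrightarrow> \<exists>xs. walk_from_to E u v xs"
  unfolding geodetic_def by blast

lemma shortest_walk_exists:
  "geodetic E \<Longrightarrow> \<exists>xs. walk_from_to E u v xs \<and> length xs = Suc (gdist E u v)"
  using geodetic_connected gdist_attained by metis

lemma gdist_self [simp]: "gdist E u u = 0"
  using gdist_le_length[of E u u "[u]"] by (simp add: walk_from_to_def)

lemma gdist_sym:
  assumes "simple_graph E" "geodetic E"
  shows "gdist E u v = gdist E v u"
proof -
  have "gdist E y x \<le> gdist E x y" for x y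
  proof -
    obtain xs where xs: "walk_from_to E x y xs" "length xs = Suc (gdist E x y)"
      using shortest_walk_exists[OF assms(2)] by blast
    then have "walk_from_to E y x (rev xs)"
      using walk_rev[OF assms(1)] by (auto simp: walk_from_to_def hd_rev last_rev)
    from gdist_le_length[OF this] show ?thesis using xs by simp
  qed
  then show ?thesis by (metis le_antisym)
qed

lemma gdist_Cons_le:
  assumes "geodetic E" "E u w"
  shows "gdist E u v \<le> Suc (gdist E w v)"
proof -
  obtain P where P: "walk_from_to E w v P" "length P = Suc (gdist E w v)"
    using shortest_walk_exists[OF assms(1)] by blast
  then have "walk_from_to E u v (u # P)"
    using assms(2) by (cases P) (auto simp: walk_from_to_def walk_Cons_Cons)
  from gdist_le_length[OF this] show ?thesis using P(2) by simp
qed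

lemma gdist_le_2_cases:
  assumes "geodetic E" "gdist E x y \<le> 2"
  shows "x = y \<or> E x y \<or> (\<exists>m. E x m \<and> E m y)"
proof -
  obtain xs where xs: "walk_from_to E x y xs" "length xs = Suc (gdist E x y)"
    using shortest_walk_exists[OF assms(1)] by blast
  with assms(2) have "length xs \<le> 3" by simp
  with xs(1) show ?thesis
    by (cases xs rule: remdups_adj.cases; cases "tl (tl xs)")
      (auto simp: walk_from_to_def walk_Cons_Cons)
qed

lemma gdist_less_if_not_geodesic:
  assumes "walk_from_to E u v xs" "\<not> geodesic E xs"
  shows "Suc (gdist E u v) < length xs"
  using assms gdist_le_length[OF assms(1)]
  by (auto simp: geodesic_def walk_from_to_def)

lemma geodetic_first_step_unique:
  assumes "geodetic E" "E u p" "E u q"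
    and "gdist E p v = k" "gdist E q v = k" "gdist E u v = Suc k"
  shows "p = q"
proof -
  obtain P where P: "walk_from_to E p v P" "length P = Suc k"
    using shortest_walk_exists[OF assms(1)] assms(4) by blast
  obtain Q where Q: "walk_from_to E q v Q" "length Q = Suc k"
    using shortest_walk_exists[OF assms(1)] assms(5) by blast
  have shortest: "\<forall>ys. walk_from_to E u v ys \<longrightarrow> length (u # R) \<le> length ys"
    if "length R = Suc k" for R
    using gdist_le_length[of E u v] assms(6) that by fastforce
  have "walk_from_to E u v (u # P)" "walk_from_to E u v (u # Q)"
    using P Q assms(2,3) by (cases P; cases Q; auto simp: walk_from_to_def walk_Cons_Cons)+
  then have "u # P = u # Q"
    using assms(1) shortest P(2) Q(2) unfolding geodetic_def by metis
  then show ?thesis using P Q by (simp add: walk_from_to_def)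
qed

lemma finite_circuit_distances: "finite {gdist E u v | u v. u \<in> set \<sigma> \<and> v \<in> set \<sigma>}"
proof -
  have "finite ((\<lambda>(u, v). gdist E u v) ` (set \<sigma> \<times> set \<sigma>))" by simp
  then show ?thesis by (rule rev_finite_subset) auto
qed

lemma gdist_le_circuit_diameter:
  "x \<in> set \<sigma> \<Longrightarrow> y \<in> set \<sigma> \<Longrightarrow> gdist E x y \<le> circuit_diameter E \<sigma>"
  unfolding circuit_diameter_def by (intro Max_ge[OF finite_circuit_distances]) auto

lemma circuit_diameter_attained:
  assumes "\<sigma> \<noteq> []"
  shows "\<exists>x \<in> set \<sigma>. \<exists>y \<in> set \<sigma>. circuit_diameter E \<sigma> = gdist E x y"
proof -
  have "{gdist E u v | u v. u \<in> set \<sigma> \<and> v \<in> set \<sigma>} \<noteq> {}"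
    using assms by (metis (mono_tags, lifting) empty_Collect_eq list.set_sel(1))
  then have "circuit_diameter E \<sigma> \<in> {gdist E u v | u v. u \<in> set \<sigma> \<and> v \<in> set \<sigma>}"
    unfolding circuit_diameter_def by (rule Max_in[OF finite_circuit_distances])
  then show ?thesis by blast
qed

(* An embedded circuit of length n, enumerated periodically by the integers. *)
locale graph_cycle =
  fixes E :: "'a \<Rightarrow> 'a \<Rightarrow> bool" and f :: "int \<Rightarrow> 'a" and n :: nat
  assumes simple: "simple_graph E"
    and f_eq_iff: "f i = f j \<longleftrightarrow> i mod int n = j mod int n"
    and f_edge: "E (f i) (f (i + 1))"
    and n_pos: "0 < n"
begin

lemma edge_sym: "E x y \<Longrightarrow> E y x"
  using simple unfolding simple_graph_def by blast

lemma no_loop: "\<not> E x x"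
  using simple unfolding simple_graph_def by blast

lemma f_periodic [simp]: "f (i + int n) = f i"
  by (simp add: f_eq_iff)

lemma f_offset: "\<exists>c. 0 \<le> c \<and> c < int n \<and> f b = f (a + c)"
proof (intro exI conjI)
  show "f b = f (a + (b - a) mod int n)"
    by (simp add: f_eq_iff mod_add_right_eq)
qed (use n_pos in simp_all)

lemma f_eq_imp_eq: "f i = f j \<Longrightarrow> \<bar>i - j\<bar> < int n \<Longrightarrow> i = j"
  using dvd_imp_le_int[of "i - j" "int n"] by (fastforce simp: f_eq_iff mod_eq_dvd_iff)

lemma walk_arc: "s \<le> t \<Longrightarrow> walk E (map f [s..t])"
  unfolding walk_def
proof (intro conjI allI impI)
  fix i assume "Suc i < length (map f [s..t])"
  then show "E (map f [s..t] ! i) (map f [s..t] ! Suc i)"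
    using f_edge[of "s + int i"] by (simp add: add_ac)
qed simp

lemma gdist_arc_le: "0 \<le> c \<Longrightarrow> gdist E (f a) (f (a + c)) \<le> nat c"
  using gdist_le_length[of E "f a" "f (a + c)" "map f [a..a + c]"] walk_arc[of a "a + c"]
  by (simp add: walk_from_to_def hd_map last_map)

lemma not_geodesic_arc3: "\<not> geodesic E (map f [i..i + 3]) \<Longrightarrow> gdist E (f i) (f (i + 3)) \<le> 2"
  using gdist_less_if_not_geodesic[of E "f i" "f (i + 3)" "map f [i..i + 3]"] walk_arc[of i "i + 3"]
  by (simp add: walk_from_to_def hd_map last_map)

lemma distinct_arc: "t - s < int n \<Longrightarrow> distinct (map f [s..t])"
  unfolding distinct_map inj_on_def using f_eq_imp_eq by (auto simp: abs_less_iff)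

lemma embedded_circuit_chord:
  assumes "s \<le> t" "t - s < int n" "E (f t) (f s)"
  shows "embedded_circuit E (map f [s..t] @ [f s])"
  unfolding embedded_circuit_def
  using assms walk_snoc[OF walk_arc] distinct_arc by (simp add: hd_map last_map)

lemma embedded_circuit_detour:
  assumes "s \<le> t" "t - s < int n" "E (f t) m" "E m (f s)" "m \<notin> range f"
  shows "embedded_circuit E (map f [s..t] @ [m, f s])"
  unfolding embedded_circuit_def
  using assms walk_snoc[OF walk_snoc[OF walk_arc]] distinct_arc
  by (auto simp: hd_map last_map butlast_append)

lemma graph_cycle_reflect: "graph_cycle E (\<lambda>i. f (- i)) n"
proof
  fix i j :: int
  have "(- i) mod int n = (- j) mod int n \<longleftrightarrow> i mod int n = j mod int n"
    by (simp add: mod_eq_dvd_iff) (metis dvd_minus_iff minus_diff_eq)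
  then show "f (- i) = f (- j) \<longleftrightarrow> i mod int n = j mod int n"
    by (simp add: f_eq_iff)
  show "E (f (- i)) (f (- (i + 1)))"
    using f_edge[of "- i - 1"] by (simp add: edge_sym)
qed (fact simple n_pos)+

end

(* The shape of a counterexample to the theorem; gdist_le_2 refutes it. *)
locale shortcut_minimal_cycle = graph_cycle +
  assumes geodetic: "geodetic E"
    and arc3_shortcut: "gdist E (f i) (f (i + 3)) \<le> 2"
    and minimal: "embedded_circuit E \<sigma> \<Longrightarrow> x \<in> set \<sigma> \<Longrightarrow> y \<in> set \<sigma> \<Longrightarrow>
      3 \<le> gdist E x y \<Longrightarrow> n \<le> circuit_length \<sigma>"
begin

lemma no_short_chord:
  assumes "s \<le> p" "p \<le> t" "s \<le> q" "q \<le> t" "t - s + 1 < int n"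
    and "3 \<le> gdist E (f p) (f q)"
  shows "\<not> E (f t) (f s)"
proof
  assume "E (f t) (f s)"
  then have "embedded_circuit E (map f [s..t] @ [f s])"
    using assms by (intro embedded_circuit_chord) auto
  moreover have "f p \<in> set (map f [s..t] @ [f s])" "f q \<in> set (map f [s..t] @ [f s])"
    using assms by auto
  ultimately have "n \<le> circuit_length (map f [s..t] @ [f s])"
    using minimal assms(6) by blast
  then show False using assms by (simp add: circuit_length_def)
qed

lemma no_short_detour:
  assumes "s \<le> p" "p \<le> t" "s \<le> q" "q \<le> t" "t - s + 2 < int n"
    and "3 \<le> gdist E (f p) (f q)" "E (f t) m" "E m (f s)"
  shows "m \<in> range f"
proof (rule ccontr)
  assume "m \<notin> range f"
  then have "embedded_circuit E (map f [s..t] @ [m, f s])"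
    using assms by (intro embedded_circuit_detour) auto
  moreover have "f p \<in> set (map f [s..t] @ [m, f s])" "f q \<in> set (map f [s..t] @ [m, f s])"
    using assms by auto
  ultimately have "n \<le> circuit_length (map f [s..t] @ [m, f s])"
    using minimal assms(6) by blast
  then show False using assms by (simp add: circuit_length_def)
qed

lemma wide_offset_gt_3:
  assumes "3 \<le> gdist E (f a) (f (a + c))" "0 \<le> c"
  shows "3 < c"
  using assms gdist_arc_le[of c a] arc3_shortcut[of a] by (cases "c = 3") auto

lemma wide_vertex_cycle_neighbours:
  assumes wide: "3 \<le> gdist E (f a) (f (a + c))" "0 \<le> c" "c < int n"
    and nb: "E (f a) (f (a + t))" "0 \<le> t" "t < int n"
  shows "t = 1 \<or> t = int n - 1"
proof -
  have "t \<noteq> 0" using nb no_loop by auto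
  moreover have False if "2 \<le> t" "t \<le> c"
    using no_short_chord[of "a + t" "a + int n" "a + int n" "a + c"] wide nb that
    by (simp add: edge_sym)
  moreover have False if "c < t" "t \<le> int n - 2"
    using no_short_chord[of a a "a + t" "a + c"] wide nb that by (simp add: edge_sym)
  ultimately show ?thesis using nb by fastforce
qed

lemma shortcut_midpoint_eq_pred:
  assumes wide: "3 \<le> gdist E (f a) (f (a + c))" "3 < c" "c < int n"
    and path: "E (f a) m" "E m (f (a + 3))"
  shows "m = f (a - 1)"
proof -
  have "m \<in> range f"
    using no_short_detour[of "a + 3" "a + int n" "a + int n" "a + c" m] wide path by simp
  then obtain t where t: "0 \<le> t" "t < int n" "m = f (a + t)"
    using f_offset by blast
  then have "t = 1 \<or> t = int n - 1"
    using wide_vertex_cycle_neighbours[of a c t] wide path by simp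
  moreover have "t \<noteq> 1"
  proof
    assume "t = 1"
    then have "E (f (a + 1 + int n)) (f (a + 3))"
      using path t by simp
    then show False
      using no_short_chord[of "a + 3" "a + int n" "a + 1 + int n" "a + c"] wide by simp
  qed
  ultimately show ?thesis
    using t by (metis f_periodic diff_add_eq add_diff_eq)
qed

(* Of the shortcuts of length at most 2 from f a to f (a + 3), minimality leaves only the one
   through f (a - 1), which closes a circuit of length n - 3 unless f (a - 1) is close to f b. *)
lemma gdist_pred_le_2:
  assumes "3 \<le> gdist E (f a) (f b)"
  shows "gdist E (f (a - 1)) (f b) \<le> 2"
proof (rule ccontr)
  assume far: "\<not> gdist E (f (a - 1)) (f b) \<le> 2"
  obtain c where c: "0 \<le> c" "c < int n" "f b = f (a + c)"
    using f_offset by blast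
  have wide: "3 \<le> gdist E (f a) (f (a + c))"
    using assms c by simp
  then have "3 < c" using c wide_offset_gt_3 by blast
  have "f a \<noteq> f (a + 3)"
    using f_eq_imp_eq[of a "a + 3"] \<open>3 < c\<close> c by auto
  then consider "E (f a) (f (a + 3))" | m where "E (f a) m" "E m (f (a + 3))"
    using gdist_le_2_cases[OF geodetic arc3_shortcut] by blast
  then show False
  proof cases
    case 1
    then show False
      using no_short_chord[of "a + 3" "a + int n" "a + int n" "a + c"] wide c \<open>3 < c\<close> by simp
  next
    case (2 m)
    then have "E (f (a - 1)) (f (a + 3))"
      using shortcut_midpoint_eq_pred[OF wide \<open>3 < c\<close> c(2)] by simp
    then show False
      using no_short_chord[of "a + 3" "a - 1 + int n" "a - 1 + int n" "a + c"] far c \<open>3 < c\<close>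
      by simp
  qed
qed

lemma shortcut_minimal_cycle_reflect: "shortcut_minimal_cycle E (\<lambda>i. f (- i)) n"
proof (intro shortcut_minimal_cycle.intro shortcut_minimal_cycle_axioms.intro
    graph_cycle_reflect geodetic)
  show "gdist E (f (- i)) (f (- (i + 3))) \<le> 2" for i
    using arc3_shortcut[of "- i - 3"] gdist_sym[OF simple geodetic] by simp
qed (fact minimal)

lemma gdist_succ_le_2:
  assumes "3 \<le> gdist E (f a) (f b)"
  shows "gdist E (f (a + 1)) (f b) \<le> 2"
proof -
  interpret reflected: shortcut_minimal_cycle E "\<lambda>i. f (- i)" n
    by (rule shortcut_minimal_cycle_reflect)
  show ?thesis using reflected.gdist_pred_le_2[of "- a" "- b"] assms by (simp add: add.commute)
qed

theorem gdist_le_2: "gdist E (f a) (f b) \<le> 2"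
proof (rule ccontr)
  assume "\<not> ?thesis"
  then have wide: "3 \<le> gdist E (f a) (f b)" by simp
  have edges: "E (f a) (f (a - 1))" "E (f a) (f (a + 1))"
    using f_edge[of "a - 1"] f_edge[of a] by (simp_all add: edge_sym)
  have "gdist E (f (a - 1)) (f b) = 2" "gdist E (f (a + 1)) (f b) = 2" "gdist E (f a) (f b) = Suc 2"
    using gdist_pred_le_2[OF wide] gdist_succ_le_2[OF wide] wide
      gdist_Cons_le[OF geodetic edges(1), of "f b"] gdist_Cons_le[OF geodetic edges(2), of "f b"]
    by linarith+
  then have "f (a - 1) = f (a + 1)"
    by (rule geodetic_first_step_unique[OF geodetic edges])
  moreover obtain c where "0 \<le> c" "c < int n" "f b = f (a + c)"
    using f_offset by blast
  then have "3 < int n" using wide wide_offset_gt_3 by fastforce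
  ultimately show False using f_eq_imp_eq[of "a - 1" "a + 1"] by simp
qed

end

definition circuit_vertex :: "'a list \<Rightarrow> int \<Rightarrow> 'a" where
  "circuit_vertex \<rho> i = \<rho> ! nat (i mod int (circuit_length \<rho>))"

lemma circuit_vertex_of_nat: "circuit_vertex \<rho> (int k) = \<rho> ! (k mod circuit_length \<rho>)"
  by (simp add: circuit_vertex_def flip: zmod_int)

lemma circuit_window:
  assumes "0 < circuit_length \<rho>"
  shows "map (\<lambda>k. \<rho> ! ((nat (j mod int (circuit_length \<rho>)) + k) mod circuit_length \<rho>)) [0..<l]
    = map (circuit_vertex \<rho>) [j..j + int l - 1]"
proof (rule nth_equalityI)
  let ?n = "circuit_length \<rho>"
  fix k assume "k < length (map (\<lambda>k. \<rho> ! ((nat (j mod int ?n) + k) mod ?n)) [0..<l])"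
  moreover have "int ((nat (j mod int ?n) + k) mod ?n) = (j + int k) mod int ?n"
    using assms by (simp add: zmod_int mod_add_left_eq)
  then have "(nat (j mod int ?n) + k) mod ?n = nat ((j + int k) mod int ?n)"
    by (metis nat_int)
  ultimately show "map (\<lambda>k. \<rho> ! ((nat (j mod int ?n) + k) mod ?n)) [0..<l] ! k
    = map (circuit_vertex \<rho>) [j..j + int l - 1] ! k"
    by (simp add: circuit_vertex_def)
qed simp

lemma circuit_length_pos:
  assumes "x \<in> set \<rho>" "y \<in> set \<rho>" "x \<noteq> y"
  shows "0 < circuit_length \<rho>"
  using assms by (cases \<rho>) (auto simp: circuit_length_def)

lemma embedded_circuit_last_nth:
  assumes "embedded_circuit E \<rho>"
  shows "\<rho> ! circuit_length \<rho> = \<rho> ! 0"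
proof -
  have "\<rho> \<noteq> []" using assms by (auto simp: embedded_circuit_def)
  then show ?thesis
    using assms by (simp add: embedded_circuit_def circuit_length_def hd_conv_nth last_conv_nth)
qed

lemma set_circuit_subset_range:
  assumes "embedded_circuit E \<rho>"
  shows "set \<rho> \<subseteq> range (circuit_vertex \<rho>)"
proof
  fix z assume "z \<in> set \<rho>"
  then obtain k where k: "k < length \<rho>" "z = \<rho> ! k" by (auto simp: in_set_conv_nth)
  show "z \<in> range (circuit_vertex \<rho>)"
  proof (cases "k < circuit_length \<rho>")
    case True
    then have "circuit_vertex \<rho> (int k) = z" using k by (simp add: circuit_vertex_of_nat)
    then show ?thesis by (metis rangeI)
  next
    case False
    then have "k = circuit_length \<rho>" using k by (simp add: circuit_length_def)
    then have "circuit_vertex \<rho> 0 = z"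
      using k embedded_circuit_last_nth[OF assms] by (simp add: circuit_vertex_def)
    then show ?thesis by (metis rangeI)
  qed
qed

lemma circuit_vertex_succ:
  assumes "embedded_circuit E \<rho>" "0 < circuit_length \<rho>"
  shows "circuit_vertex \<rho> (i + 1) = \<rho> ! Suc (nat (i mod int (circuit_length \<rho>)))"
proof -
  let ?n = "circuit_length \<rho>"
  define p where "p = nat (i mod int ?n)"
  have p: "p < ?n" "int p = i mod int ?n"
    using assms(2) by (simp_all add: p_def nat_less_iff)
  then have succ: "(i + 1) mod int ?n = (int p + 1) mod int ?n"
    by (simp add: mod_add_left_eq)
  show ?thesis
  proof (cases "Suc p < ?n")
    case True
    then have "(i + 1) mod int ?n = int (Suc p)" using succ by simp
    then show ?thesis unfolding circuit_vertex_def p_def[symmetric] by (metis nat_int)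
  next
    case False
    then have "Suc p = ?n" using p by simp
    then have "(i + 1) mod int ?n = 0" using succ by (metis mod_self of_nat_Suc add.commute)
    then show ?thesis
      using \<open>Suc p = ?n\<close> embedded_circuit_last_nth[OF assms(1)] by (simp add: circuit_vertex_def p_def)
  qed
qed

lemma graph_cycle_circuit_vertex:
  assumes "simple_graph E" "embedded_circuit E \<rho>" "0 < circuit_length \<rho>"
  shows "graph_cycle E (circuit_vertex \<rho>) (circuit_length \<rho>)"
proof
  let ?n = "circuit_length \<rho>"
  have len: "length \<rho> = Suc ?n" using assms(3) by (simp add: circuit_length_def)
  fix i j :: int
  have "nat (i mod int ?n) < ?n" "nat (j mod int ?n) < ?n"
    using assms(3) by (simp_all add: nat_less_iff)
  moreover have "distinct (butlast \<rho>)" "length (butlast \<rho>) = ?n"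
    using assms(2) len by (simp_all add: embedded_circuit_def)
  ultimately show "circuit_vertex \<rho> i = circuit_vertex \<rho> j \<longleftrightarrow> i mod int ?n = j mod int ?n"
    unfolding circuit_vertex_def using assms(3)
    by (metis nth_butlast nth_eq_iff_index_eq nat_eq_iff2 pos_mod_sign of_nat_0_less_iff)
  have "E (\<rho> ! k) (\<rho> ! Suc k)" if "k < ?n" for k
    using assms(2) that len by (simp add: embedded_circuit_def walk_def)
  then show "E (circuit_vertex \<rho> i) (circuit_vertex \<rho> (i + 1))"
    using circuit_vertex_succ[OF assms(2,3)] assms(3)
    by (simp add: circuit_vertex_def nat_less_iff)
qed (fact assms)+

theorem lemma6:
  fixes E :: "'a \<Rightarrow> 'a \<Rightarrow> bool" and \<rho> :: "'a list"
  assumes "simple_graph E" and "locally_finite E" and "geodetic E"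
    and "embedded_circuit E \<rho>" and "circuit_diameter E \<rho> > 2"
    and "\<And>\<sigma>. embedded_circuit E \<sigma> \<Longrightarrow> circuit_diameter E \<sigma> > 2 \<Longrightarrow>
            circuit_length \<rho> \<le> circuit_length \<sigma>"
  shows "\<exists>i < circuit_length \<rho>.
           geodesic E (map (\<lambda>k. \<rho> ! ((i + k) mod circuit_length \<rho>)) [0..<4])"
proof (rule ccontr)
  assume no_geodesic: "\<not> ?thesis"
  define n where "n = circuit_length \<rho>"
  define f where "f = circuit_vertex \<rho>"
  obtain x y where xy: "x \<in> set \<rho>" "y \<in> set \<rho>" "3 \<le> gdist E x y"
    using circuit_diameter_attained[of \<rho> E] assms(4,5) by (fastforce simp: embedded_circuit_def)
  then have "0 < n"
    unfolding n_def by (intro circuit_length_pos[of x \<rho> y]) auto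
  then interpret graph_cycle E f n
    unfolding n_def f_def by (rule graph_cycle_circuit_vertex[OF assms(1,4)])
  have "gdist E (f j) (f (j + 3)) \<le> 2" for j
  proof (rule not_geodesic_arc3)
    have "nat (j mod int n) < n" using \<open>0 < n\<close> by (simp add: nat_less_iff)
    then have "\<not> geodesic E (map (\<lambda>k. \<rho> ! ((nat (j mod int n) + k) mod n)) [0..<4])"
      using no_geodesic unfolding n_def by blast
    then show "\<not> geodesic E (map f [j..j + 3])"
      using circuit_window[of \<rho> j 4] \<open>0 < n\<close> unfolding n_def f_def by (simp add: add.commute)
  qed
  moreover have "n \<le> circuit_length \<sigma>"
    if "embedded_circuit E \<sigma>" "x \<in> set \<sigma>" "y \<in> set \<sigma>" "3 \<le> gdist E x y" for \<sigma> x y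
    using that assms(6) gdist_le_circuit_diameter[of x \<sigma> y E] by (fastforce simp: n_def)
  ultimately interpret shortcut_minimal_cycle E f n
    using assms(3) by unfold_locales
  obtain a b where "x = f a" "y = f b"
    using xy set_circuit_subset_range[OF assms(4)] unfolding f_def by blast
  then show False using xy gdist_le_2[of a b] by simp
qed

end
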